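(* Every finitely presented thin groupoid has deficiency $0$.
   Context: A small graph $G$ consists of a set of objects, a set of arrows, and domain and codomain maps. $\mathcal{L}_1\mathcal{F}_1(G)$ is the free groupoid on $G$. A small groupoidal computad $\mathfrak{g}=(G,\mathfrak{g}_2,s,t)$ is a set $\mathfrak{g}_2$ with, for each $\alpha\in\mathfrak{g}_2$, two parallel morphisms $s(\alpha),t(\alpha)$ of $\mathcal{L}_1\mathcal{F}_1(G)$. It is connected if $G$ is connected. It presents a groupoid $X$ if $X$ is isomorphic to the quotient of $\mathcal{L}_1\mathcal{F}_1(G)$ by the relations $s(\alpha)=t(\alpha)$. $\mathcal{F}_{\mathrm{Top}_1}(G)$ is the topological realization of $G$: vertices, with an interval glued per arrow. $\chi$ is the Euler characteristic with real coefficients. A groupoid $X$ is finitely presented if some small connected groupoidal computad $(G,\mathfrak{g}_2,s,t)$ with $\chi(\mathcal{F}_{\mathrm{Top}_1}(G))\in\mathbb{Z}$ and $\mathfrak{g}_2$ finite presents $X$. The deficiency of such a presentation is $1-|\mathfrak{g}_2|-\chi(\mathcal{F}_{\mathrm{Top}_1}(G))$. This equals $1-\chi$ of the $2$-complex obtained from $\mathcal{F}_{\mathrm{Top}_1}(G)$ by attaching one $2$-cell per $\alpha$ along the loop given by $s(\alpha)$ followed by $t(\alpha)$ reversed. The deficiency of a finitely presented groupoid $X$ is the maximum of the deficiencies of all such finite presentations of $X$. A groupoid is thin if it has at most one morphism between any two objects. *)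

theory Defs
  imports Complex_Main
begin

record ('v,'a) graph =
  verts :: "'v set"
  arrs  :: "'a set"
  gsrc  :: "'a \<Rightarrow> 'v"
  gtgt  :: "'a \<Rightarrow> 'v"

definition graph_wf :: "('v,'a) graph \<Rightarrow> bool" where
  "graph_wf G \<longleftrightarrow> (\<forall>e\<in>arrs G. gsrc G e \<in> verts G \<and> gtgt G e \<in> verts G)"

text \<open>Letters of the free groupoid: an arrow traversed forwards (True) or backwards (False).\<close>
type_synonym 'a letter = "'a \<times> bool"

fun lsrc :: "('v,'a) graph \<Rightarrow> 'a letter \<Rightarrow> 'v" where
  "lsrc G (a, b) = (if b then gsrc G a else gtgt G a)"

fun ltgt :: "('v,'a) graph \<Rightarrow> 'a letter \<Rightarrow> 'v" where
  "ltgt G (a, b) = (if b then gtgt G a else gsrc G a)"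

fun linv :: "'a letter \<Rightarrow> 'a letter" where
  "linv (a, b) = (a, \<not> b)"

definition winv :: "'a letter list \<Rightarrow> 'a letter list" where
  "winv w = rev (map linv w)"

fun is_path :: "('v,'a) graph \<Rightarrow> 'v \<Rightarrow> 'a letter list \<Rightarrow> 'v \<Rightarrow> bool" where
  "is_path G x [] y \<longleftrightarrow> x \<in> verts G \<and> x = y"
| "is_path G x (l # w) y \<longleftrightarrow> fst l \<in> arrs G \<and> lsrc G l = x \<and> is_path G (ltgt G l) w y"

definition reduced :: "'a letter list \<Rightarrow> bool" where
  "reduced w \<longleftrightarrow> (\<forall>i. Suc i < length w \<longrightarrow> w ! Suc i \<noteq> linv (w ! i))"

text \<open>Morphisms of the free groupoid L1F1(G): reduced words with their endpoints.\<close>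
definition free_mor :: "('v,'a) graph \<Rightarrow> ('v \<times> 'a letter list \<times> 'v) set" where
  "free_mor G = {(x, w, y). is_path G x w y \<and> reduced w}"

definition graph_connected :: "('v,'a) graph \<Rightarrow> bool" where
  "graph_connected G \<longleftrightarrow> verts G \<noteq> {} \<and> (\<forall>x\<in>verts G. \<forall>y\<in>verts G. \<exists>w. is_path G x w y)"

section \<open>Euler characteristic (real coefficients) of the realization, via cellular homology\<close>

definition conn_rel :: "('v,'a) graph \<Rightarrow> ('v \<times> 'v) set" where
  "conn_rel G = {(x, y). \<exists>w. is_path G x w y}"

text \<open>Real cellular 1-chains: finitely supported real functions on the arrows.\<close>
definition chains1 :: "('v,'a) graph \<Rightarrow> ('a \<Rightarrow> real) set" where
  "chains1 G = {c. finite {e. c e \<noteq> 0} \<and> {e. c e \<noteq> 0} \<subseteq> arrs G}"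

definition bdry :: "('v,'a) graph \<Rightarrow> ('a \<Rightarrow> real) \<Rightarrow> 'v \<Rightarrow> real" where
  "bdry G c v = (\<Sum>e\<in>{e. c e \<noteq> 0}. (if gtgt G e = v then c e else 0) - (if gsrc G e = v then c e else 0))"

text \<open>H_1 of a graph (no 2-cells) = the real cycle space.\<close>
definition cycles :: "('v,'a) graph \<Rightarrow> ('a \<Rightarrow> real) set" where
  "cycles G = {c \<in> chains1 G. \<forall>v. bdry G c v = 0}"

definition betti1_is :: "('v,'a) graph \<Rightarrow> nat \<Rightarrow> bool" where
  "betti1_is G n \<longleftrightarrow> (\<exists>B. finite B \<and> card B = n \<and> B \<subseteq> cycles G
     \<and> (\<forall>u. (\<forall>e. (\<Sum>b\<in>B. u b * b e) = 0) \<longrightarrow> (\<forall>b\<in>B. u b = 0))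
     \<and> (\<forall>c\<in>cycles G. \<exists>u. \<forall>e. c e = (\<Sum>b\<in>B. u b * b e)))"

text \<open>chi(F_Top1(G)) is defined and equals the integer k: dim H_0 = number of
  connected components (finite), dim H_1 finite, k = dim H_0 - dim H_1.\<close>
definition euler_char_is :: "('v,'a) graph \<Rightarrow> int \<Rightarrow> bool" where
  "euler_char_is G k \<longleftrightarrow> (\<exists>n0 n1. finite (verts G // conn_rel G) \<and> card (verts G // conn_rel G) = n0
      \<and> betti1_is G n1 \<and> k = int n0 - int n1)"

record ('o,'m) groupoid =
  Obj :: "'o set"
  Mor :: "'m set"
  Dom :: "'m \<Rightarrow> 'o"
  Cod :: "'m \<Rightarrow> 'o"
  Idt :: "'o \<Rightarrow> 'm"
  Comp :: "'m \<Rightarrow> 'm \<Rightarrow> 'm"  \<comment> \<open>Comp g f = g after f, defined when Cod f = Dom g\<close>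

definition is_groupoid :: "('o,'m) groupoid \<Rightarrow> bool" where
  "is_groupoid X \<longleftrightarrow>
     (\<forall>f\<in>Mor X. Dom X f \<in> Obj X \<and> Cod X f \<in> Obj X)
   \<and> (\<forall>x\<in>Obj X. Idt X x \<in> Mor X \<and> Dom X (Idt X x) = x \<and> Cod X (Idt X x) = x)
   \<and> (\<forall>f\<in>Mor X. \<forall>g\<in>Mor X. Cod X f = Dom X g \<longrightarrow>
        Comp X g f \<in> Mor X \<and> Dom X (Comp X g f) = Dom X f \<and> Cod X (Comp X g f) = Cod X g)
   \<and> (\<forall>f\<in>Mor X. \<forall>g\<in>Mor X. \<forall>h\<in>Mor X. Cod X f = Dom X g \<longrightarrow> Cod X g = Dom X h \<longrightarrow>
        Comp X h (Comp X g f) = Comp X (Comp X h g) f)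
   \<and> (\<forall>f\<in>Mor X. Comp X f (Idt X (Dom X f)) = f \<and> Comp X (Idt X (Cod X f)) f = f)
   \<and> (\<forall>f\<in>Mor X. \<exists>g\<in>Mor X. Dom X g = Cod X f \<and> Cod X g = Dom X f \<and>
        Comp X g f = Idt X (Dom X f) \<and> Comp X f g = Idt X (Cod X f))"

definition thin :: "('o,'m) groupoid \<Rightarrow> bool" where
  "thin X \<longleftrightarrow> (\<forall>f\<in>Mor X. \<forall>g\<in>Mor X. Dom X f = Dom X g \<and> Cod X f = Cod X g \<longrightarrow> f = g)"

definition groupoid_iso :: "('o,'m) groupoid \<Rightarrow> ('p,'n) groupoid \<Rightarrow> bool" where
  "groupoid_iso X Y \<longleftrightarrow> (\<exists>Fo Fm. bij_betw Fo (Obj X) (Obj Y) \<and> bij_betw Fm (Mor X) (Mor Y)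
     \<and> (\<forall>f\<in>Mor X. Dom Y (Fm f) = Fo (Dom X f) \<and> Cod Y (Fm f) = Fo (Cod X f))
     \<and> (\<forall>x\<in>Obj X. Fm (Idt X x) = Idt Y (Fo x))
     \<and> (\<forall>f\<in>Mor X. \<forall>g\<in>Mor X. Cod X f = Dom X g \<longrightarrow> Fm (Comp X g f) = Comp Y (Fm g) (Fm f)))"

record ('v,'a,'c) computad =
  cgraph :: "('v,'a) graph"
  cells  :: "'c set"
  csrc   :: "'c \<Rightarrow> 'v \<times> 'a letter list \<times> 'v"
  ctgt   :: "'c \<Rightarrow> 'v \<times> 'a letter list \<times> 'v"

definition computad_wf :: "('v,'a,'c) computad \<Rightarrow> bool" where
  "computad_wf P \<longleftrightarrow> graph_wf (cgraph P) \<and>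
     (\<forall>\<alpha>\<in>cells P. csrc P \<alpha> \<in> free_mor (cgraph P) \<and> ctgt P \<alpha> \<in> free_mor (cgraph P)
        \<and> fst (csrc P \<alpha>) = fst (ctgt P \<alpha>) \<and> snd (snd (csrc P \<alpha>)) = snd (snd (ctgt P \<alpha>)))"

definition word :: "'v \<times> 'a letter list \<times> 'v \<Rightarrow> 'a letter list" where
  "word p = fst (snd p)"

definition is_path3 :: "('v,'a) graph \<Rightarrow> 'v \<times> 'a letter list \<times> 'v \<Rightarrow> bool" where
  "is_path3 G p \<longleftrightarrow> is_path G (fst p) (fst (snd p)) (snd (snd p))"

inductive pstep :: "('v,'a,'c) computad \<Rightarrow> 'v \<times> 'a letter list \<times> 'v \<Rightarrow> 'v \<times> 'a letter list \<times> 'v \<Rightarrow> bool"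
  for P where
  cancel: "is_path (cgraph P) x (u @ [l, linv l] @ v) y \<Longrightarrow> is_path (cgraph P) x (u @ v) y \<Longrightarrow>
           pstep P (x, u @ [l, linv l] @ v, y) (x, u @ v, y)"
| relate: "\<alpha> \<in> cells P \<Longrightarrow> is_path (cgraph P) x (u @ word (csrc P \<alpha>) @ v) y \<Longrightarrow>
           is_path (cgraph P) x (u @ word (ctgt P \<alpha>) @ v) y \<Longrightarrow>
           pstep P (x, u @ word (csrc P \<alpha>) @ v, y) (x, u @ word (ctgt P \<alpha>) @ v, y)"

definition pclass :: "('v,'a,'c) computad \<Rightarrow> 'v \<times> 'a letter list \<times> 'v \<Rightarrow> ('v \<times> 'a letter list \<times> 'v) set" where
  "pclass P p = {q. equivclp (pstep P) p q}"

definition crep :: "('v \<times> 'a letter list \<times> 'v) set \<Rightarrow> 'v \<times> 'a letter list \<times> 'v" where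
  "crep m = (SOME p. p \<in> m)"

text \<open>The groupoid presented by P: the free groupoid on the graph modulo s(alpha) = t(alpha).
  Morphisms x -> y are classes of paths x -> y.\<close>
definition presented :: "('v,'a,'c) computad \<Rightarrow> ('v, ('v \<times> 'a letter list \<times> 'v) set) groupoid" where
  "presented P = \<lparr> Obj = verts (cgraph P),
     Mor = {pclass P p | p. is_path3 (cgraph P) p},
     Dom = (\<lambda>m. fst (crep m)),
     Cod = (\<lambda>m. snd (snd (crep m))),
     Idt = (\<lambda>x. pclass P (x, [], x)),
     Comp = (\<lambda>g f. pclass P (fst (crep f), word (crep f) @ word (crep g), snd (snd (crep g)))) \<rparr>"

definition presents :: "('v,'a,'c) computad \<Rightarrow> ('o,'m) groupoid \<Rightarrow> bool" where
  "presents P X \<longleftrightarrow> groupoid_iso (presented P) X"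

definition fin_presentation :: "('o,'m) groupoid \<Rightarrow> ('v,'a,'c) computad \<Rightarrow> bool" where
  "fin_presentation X P \<longleftrightarrow> computad_wf P \<and> graph_connected (cgraph P)
     \<and> (\<exists>k. euler_char_is (cgraph P) k) \<and> finite (cells P) \<and> presents P X"

definition has_deficiency :: "('v,'a,'c) computad \<Rightarrow> int \<Rightarrow> bool" where
  "has_deficiency P d \<longleftrightarrow> (\<exists>k. euler_char_is (cgraph P) k \<and> d = 1 - int (card (cells P)) - k)"

end

theory Submission
  imports Defs "HOL-Library.Function_Algebras"
begin

text \<open>
  For a thin groupoid two parallel paths are always identified, so every loop of a
  presentation becomes trivial. Abelianising, every loop word is then a real linear
  combination of the relator vectors s(\<alpha>) - t(\<alpha>); since loops span the cycle space
  H_1, we get dim H_1 \<le> |g_2|, i.e. the deficiency dim H_1 - |g_2| is \<le> 0.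
  Conversely, the star graph joining a chosen object to all others, with no 2-cells, is a
  tree and presents the (connected) thin groupoid, with deficiency exactly 0.
\<close>

lemma is_path_end: "is_path G x w y \<Longrightarrow> y \<in> verts G"
  by (induction w arbitrary: x) auto

lemma is_path_verts: "graph_wf G \<Longrightarrow> is_path G x w y \<Longrightarrow> x \<in> verts G \<and> y \<in> verts G"
proof (induction w arbitrary: x)
  case (Cons l w)
  then show ?case by (cases l) (auto split: if_splits simp: graph_wf_def)
qed simp

lemma is_path_append:
  "graph_wf G \<Longrightarrow> is_path G x (u @ v) y \<longleftrightarrow> (\<exists>z. is_path G x u z \<and> is_path G z v y)"
proof (induction u arbitrary: x)
  case Nil
  then show ?case using is_path_verts by fastforce
qed auto

lemma lsrc_linv [simp]: "lsrc G (linv l) = ltgt G l"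
  and ltgt_linv [simp]: "ltgt G (linv l) = lsrc G l"
  and fst_linv [simp]: "fst (linv l) = fst l"
  by (cases l; auto)+

lemma is_path_winv: "graph_wf G \<Longrightarrow> is_path G x w y \<Longrightarrow> is_path G y (winv w) x"
proof (induction w arbitrary: x)
  case Nil
  then show ?case by (auto simp: winv_def)
next
  case (Cons l w)
  then have "is_path G y (winv w) (ltgt G l)" by simp
  moreover have "is_path G (ltgt G l) [linv l] x" using Cons.prems is_path_verts by fastforce
  ultimately show ?case by (auto simp: winv_def is_path_append[OF Cons.prems(1)])
qed

lemma pstep_ends: "pstep P p q \<Longrightarrow> fst p = fst q \<and> snd (snd p) = snd (snd q)"
  by (induction rule: pstep.induct) auto

lemma equivclp_pstep_ends:
  "equivclp (pstep P) p q \<Longrightarrow> fst p = fst q \<and> snd (snd p) = snd (snd q)"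
  by (induction rule: equivclp_induct) (auto dest: pstep_ends)

lemma pclass_eq_iff: "pclass P p = pclass P q \<longleftrightarrow> equivclp (pstep P) p q"
  unfolding pclass_def
  by (metis (no_types, lifting) equivclp_sym equivclp_trans mem_Collect_eq equivclp_refl set_eq_iff)

lemma equivclp_crep_pclass: "equivclp (pstep P) p (crep (pclass P p))"
  unfolding crep_def pclass_def by (rule someI2[of _ p]) auto

lemma Dom_presented_pclass [simp]: "Dom (presented P) (pclass P p) = fst p"
  and Cod_presented_pclass [simp]: "Cod (presented P) (pclass P p) = snd (snd p)"
  using equivclp_pstep_ends[OF equivclp_crep_pclass[of P p]] by (simp_all add: presented_def)

lemma Obj_presented [simp]: "Obj (presented P) = verts (cgraph P)"
  and Idt_presented: "Idt (presented P) x = pclass P (x, [], x)"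
  by (simp_all add: presented_def)

lemma pclass_in_Mor_presented: "is_path (cgraph P) x w y \<Longrightarrow> pclass P (x, w, y) \<in> Mor (presented P)"
  by (auto simp: presented_def is_path3_def)

lemma Mor_presented_cases:
  assumes "m \<in> Mor (presented P)"
  obtains x w y where "m = pclass P (x, w, y)" and "is_path (cgraph P) x w y"
  using assms by (auto simp: presented_def is_path3_def)

lemma Comp_presented:
  "Comp (presented P) g f
     = pclass P (Dom (presented P) f, word (crep f) @ word (crep g), Cod (presented P) g)"
  by (simp add: presented_def)

lemma presented_ends_in_verts:
  "graph_wf (cgraph P) \<Longrightarrow> m \<in> Mor (presented P)
   \<Longrightarrow> Dom (presented P) m \<in> verts (cgraph P) \<and> Cod (presented P) m \<in> verts (cgraph P)"
  by (auto elim!: Mor_presented_cases dest: is_path_verts)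

lemma Dom_Comp_presented: "Dom (presented P) (Comp (presented P) g f) = Dom (presented P) f"
  and Cod_Comp_presented: "Cod (presented P) (Comp (presented P) g f) = Cod (presented P) g"
  by (simp_all add: Comp_presented)

lemma presented_hom_nonempty:
  assumes "graph_connected (cgraph P)" and "x \<in> verts (cgraph P)" and "y \<in> verts (cgraph P)"
  shows "\<exists>f\<in>Mor (presented P). Dom (presented P) f = x \<and> Cod (presented P) f = y"
proof -
  obtain w where "is_path (cgraph P) x w y" using assms by (auto simp: graph_connected_def)
  then show ?thesis by (force intro: pclass_in_Mor_presented)
qed

lemma presents_hom_nonempty:
  assumes "presents P X" and "graph_connected (cgraph P)" and "x \<in> Obj X" and "y \<in> Obj X"
  shows "\<exists>f\<in>Mor X. Dom X f = x \<and> Cod X f = y"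
proof -
  obtain Fo Fm where Fo: "bij_betw Fo (verts (cgraph P)) (Obj X)"
    and Fm: "Fm ` Mor (presented P) = Mor X"
    and ends: "\<forall>f\<in>Mor (presented P). Dom X (Fm f) = Fo (Dom (presented P) f)
                                       \<and> Cod X (Fm f) = Fo (Cod (presented P) f)"
    using assms(1) by (auto simp: presents_def groupoid_iso_def bij_betw_def)
  obtain x' y' where "x' \<in> verts (cgraph P)" "x = Fo x'" "y' \<in> verts (cgraph P)" "y = Fo y'"
    using Fo assms(3,4) unfolding bij_betw_def by blast
  then show ?thesis using presented_hom_nonempty[OF assms(2)] Fm ends by fastforce
qed

lemma presents_Obj_nonempty:
  "presents P X \<Longrightarrow> graph_connected (cgraph P) \<Longrightarrow> Obj X \<noteq> {}"
  by (auto simp: presents_def groupoid_iso_def bij_betw_def graph_connected_def)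

lemma thin_presents_parallel_paths_equiv:
  assumes "thin X" and "presents Q X"
    and u: "is_path (cgraph Q) x u y" and v: "is_path (cgraph Q) x v y"
  shows "equivclp (pstep Q) (x, u, y) (x, v, y)"
proof -
  obtain Fo Fm where Fm: "bij_betw Fm (Mor (presented Q)) (Mor X)"
    and ends: "\<forall>f\<in>Mor (presented Q). Dom X (Fm f) = Fo (Dom (presented Q) f)
                                       \<and> Cod X (Fm f) = Fo (Cod (presented Q) f)"
    using assms(2) by (auto simp: presents_def groupoid_iso_def)
  have mu: "pclass Q (x, u, y) \<in> Mor (presented Q)" and mv: "pclass Q (x, v, y) \<in> Mor (presented Q)"
    using u v by (simp_all add: pclass_in_Mor_presented)
  moreover have "Fm (pclass Q (x, u, y)) \<in> Mor X" "Fm (pclass Q (x, v, y)) \<in> Mor X"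
    using mu mv Fm by (auto simp: bij_betw_def)
  ultimately have "Fm (pclass Q (x, u, y)) = Fm (pclass Q (x, v, y))"
    using \<open>thin X\<close> ends unfolding thin_def by simp
  then have "pclass Q (x, u, y) = pclass Q (x, v, y)"
    using Fm mu mv by (auto simp: bij_betw_def inj_on_def)
  then show ?thesis by (simp add: pclass_eq_iff)
qed

subsection \<open>Abelianisation of words\<close>

definition scale_fun :: "real \<Rightarrow> ('a \<Rightarrow> real) \<Rightarrow> 'a \<Rightarrow> real" where
  "scale_fun r f = (\<lambda>x. r * f x)"

interpretation fun_vs: vector_space scale_fun
  by unfold_locales (auto simp: scale_fun_def algebra_simps)

lemma sum_fun_apply: "(sum f A) x = (\<Sum>a\<in>A. f a x)"
  by (induction A rule: infinite_finite_induct) auto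

lemma equivclp_diff_in_span:
  assumes "equivclp r a b" and r_diff: "\<And>x y. r x y \<Longrightarrow> f x - f y \<in> fun_vs.span D"
  shows "f a - f b \<in> fun_vs.span D"
  using assms(1)
proof (induction rule: equivclp_induct)
  case base
  then show ?case by (metis diff_self fun_vs.span_zero)
next
  case (step y z)
  from step(2) have "f y - f z \<in> fun_vs.span D"
  proof
    assume "r z y"
    from fun_vs.span_neg[OF r_diff[OF this]] show ?thesis by simp
  qed (rule r_diff)
  then have "(f a - f y) + (f y - f z) \<in> fun_vs.span D"
    using step.IH by (rule fun_vs.span_add[rotated])
  then show ?case by (metis add_diff_eq diff_add_cancel)
qed

text \<open>The image of a word in the real 1-chains: the exponent sum of each arrow.\<close>
fun abel :: "'a letter list \<Rightarrow> 'a \<Rightarrow> real" where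
  "abel [] = 0"
| "abel (l # w) = (\<lambda>e. (if e = fst l then (if snd l then 1 else -1) else 0)) + abel w"

lemma abel_append: "abel (u @ v) = abel u + abel v"
  by (induction u) (auto simp: add.assoc)

lemma abel_cancel: "abel [l, linv l] = 0"
  by (cases l) (auto simp: fun_eq_iff)

lemma abel_winv: "abel (winv w) = - abel w"
proof (induction w)
  case (Cons l w)
  have "abel [linv l] = - abel [l]" by (cases l) (auto simp: fun_eq_iff)
  then show ?case using Cons by (simp add: winv_def abel_append fun_eq_iff)
qed (simp add: winv_def)

definition relator_vec :: "('v,'a,'c) computad \<Rightarrow> 'c \<Rightarrow> 'a \<Rightarrow> real" where
  "relator_vec Q \<alpha> = abel (word (csrc Q \<alpha>)) - abel (word (ctgt Q \<alpha>))"

lemma equivclp_pstep_abel: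
  assumes "equivclp (pstep Q) p q"
  shows "abel (word p) - abel (word q) \<in> fun_vs.span (relator_vec Q ` cells Q)"
  using assms
proof (rule equivclp_diff_in_span)
  fix p q assume "pstep Q p q"
  then show "abel (word p) - abel (word q) \<in> fun_vs.span (relator_vec Q ` cells Q)"
  proof (induction rule: pstep.induct)
    case (cancel x u l v y)
    then show ?case
      by (simp only: word_def prod.sel abel_append abel_cancel add_0_left diff_self fun_vs.span_zero)
  next
    case (relate \<alpha> x u v y)
    then show ?case by (simp add: word_def abel_append relator_vec_def fun_vs.span_base)
  qed
qed

subsection \<open>Loops span the cycle space\<close>

lemma cycle_orthogonal_coboundary:
  assumes "c \<in> cycles G"
  shows "(\<Sum>e | c e \<noteq> 0. c e * (h (gtgt G e) - h (gsrc G e))) = 0"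
proof -
  define F where "F = {e. c e \<noteq> 0}"
  define V where "V = gsrc G ` F \<union> gtgt G ` F"
  have "finite F" using assms by (simp add: cycles_def chains1_def F_def)
  then have "finite V" by (simp add: V_def)
  have "0 = (\<Sum>v\<in>V. h v * bdry G c v)"
    using assms by (simp add: cycles_def)
  also have "\<dots> = (\<Sum>e\<in>F. (\<Sum>v\<in>V. if gtgt G e = v then c e * h v else 0)
                         - (\<Sum>v\<in>V. if gsrc G e = v then c e * h v else 0))"
    unfolding bdry_def F_def[symmetric] sum_distrib_left sum_subtractf[symmetric]
    by (subst sum.swap) (auto intro!: sum.cong simp: right_diff_distrib)
  also have "\<dots> = (\<Sum>e\<in>F. c e * (h (gtgt G e) - h (gsrc G e)))"
    using \<open>finite V\<close> by (intro sum.cong) (auto simp: V_def sum.delta right_diff_distrib)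
  finally show ?thesis by (simp add: F_def)
qed

lemma cycle_in_span_of_loops:
  assumes wf: "graph_wf G" and conn: "graph_connected G" and r: "r \<in> verts G"
    and c: "c \<in> cycles G"
    and loops: "\<And>L. is_path G r L r \<Longrightarrow> abel L \<in> fun_vs.span D"
  shows "c \<in> fun_vs.span D"
proof -
  obtain p where p: "\<And>v. v \<in> verts G \<Longrightarrow> is_path G r (p v) v"
    using conn r unfolding graph_connected_def by metis
  define F where "F = {e. c e \<noteq> 0}"
  have "finite F" and F_arrs: "F \<subseteq> arrs G"
    using c by (auto simp: cycles_def chains1_def F_def)
  define loop where "loop e = p (gsrc G e) @ [(e, True)] @ winv (p (gtgt G e))" for e
  have loop_path: "is_path G r (loop e) r" if "e \<in> F" for e
  proof -
    have e: "e \<in> arrs G" using that F_arrs by auto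
    then have "gsrc G e \<in> verts G" "gtgt G e \<in> verts G" using wf by (auto simp: graph_wf_def)
    then show ?thesis
      using e p is_path_winv[OF wf p] by (auto simp: loop_def is_path_append[OF wf])
  qed
  have "c x = (\<Sum>e\<in>F. scale_fun (c e) (abel (loop e))) x" for x
  proof -
    \<comment> \<open>the tree parts p(s e) and p(t e) cancel because c is a cycle\<close>
    have "(\<Sum>e\<in>F. scale_fun (c e) (abel (loop e))) x
        = (\<Sum>e\<in>F. c e * (if x = e then 1 else 0))
          - (\<Sum>e\<in>F. c e * (abel (p (gtgt G e)) x - abel (p (gsrc G e)) x))"
      by (simp add: loop_def sum_fun_apply scale_fun_def abel_append abel_winv
                    algebra_simps sum.distrib sum_subtractf cong: if_cong)
    also have "(\<Sum>e\<in>F. c e * (abel (p (gtgt G e)) x - abel (p (gsrc G e)) x)) = 0"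
      using cycle_orthogonal_coboundary[OF c, of "\<lambda>v. abel (p v) x"] by (simp add: F_def)
    also have "(\<Sum>e\<in>F. c e * (if x = e then 1 else 0)) = c x"
      using \<open>finite F\<close> by (cases "x \<in> F") (auto simp: F_def if_distrib cong: if_cong)
    finally show ?thesis by simp
  qed
  moreover have "(\<Sum>e\<in>F. scale_fun (c e) (abel (loop e))) \<in> fun_vs.span D"
    using loop_path loops by (intro fun_vs.span_sum fun_vs.span_scale) auto
  ultimately show ?thesis by (metis ext)
qed

lemma independent_if_coefficients_vanish:
  assumes "finite B" and "\<forall>u. (\<forall>e. (\<Sum>b\<in>B. u b * b e) = 0) \<longrightarrow> (\<forall>b\<in>B. u b = 0)"
  shows "fun_vs.independent B"
proof
  assume "fun_vs.dependent B"
  then obtain u where u0: "(\<Sum>b\<in>B. scale_fun (u b) b) = 0" and "\<exists>b\<in>B. u b \<noteq> 0"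
    using fun_vs.dependent_finite[OF assms(1)] by auto
  moreover have "(\<Sum>b\<in>B. u b * b e) = 0" for e
    using fun_cong[OF u0, of e] by (simp add: sum_fun_apply scale_fun_def)
  ultimately show False using assms(2) by blast
qed

lemma betti1_le_card_cells:
  assumes "thin X" and "presents Q X" and wf: "graph_wf (cgraph Q)"
    and conn: "graph_connected (cgraph Q)" and "finite (cells Q)"
    and "betti1_is (cgraph Q) n"
  shows "n \<le> card (cells Q)"
proof -
  let ?G = "cgraph Q" and ?D = "relator_vec Q ` cells Q"
  obtain B where "finite B" and "card B = n" and B_cycles: "B \<subseteq> cycles ?G"
    and B_indep: "\<forall>u. (\<forall>e. (\<Sum>b\<in>B. u b * b e) = 0) \<longrightarrow> (\<forall>b\<in>B. u b = 0)"
    using assms(6) by (auto simp: betti1_is_def)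
  obtain r where r: "r \<in> verts ?G" using conn by (auto simp: graph_connected_def)
  have "abel L \<in> fun_vs.span ?D" if L: "is_path ?G r L r" for L
  proof -
    have "is_path ?G r [] r" using r by simp
    from thin_presents_parallel_paths_equiv[OF assms(1,2) L this]
    have "abel L - abel [] \<in> fun_vs.span ?D"
      using equivclp_pstep_abel by (fastforce simp: word_def)
    then show ?thesis by simp
  qed
  then have "B \<subseteq> fun_vs.span ?D"
    using B_cycles cycle_in_span_of_loops[OF wf conn r] by blast
  then have "card B \<le> card ?D"
    using fun_vs.independent_span_bound \<open>finite (cells Q)\<close>
      independent_if_coefficients_vanish[OF \<open>finite B\<close> B_indep] by blast
  also have "\<dots> \<le> card (cells Q)" using \<open>finite (cells Q)\<close> by (rule card_image_le)
  finally show ?thesis using \<open>card B = n\<close> by simp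
qed

lemma connected_quotient_conn_rel:
  assumes "graph_connected G" shows "verts G // conn_rel G = {verts G}"
proof -
  have "conn_rel G `` {x} = verts G" if "x \<in> verts G" for x
    using assms that by (auto simp: graph_connected_def conn_rel_def dest: is_path_end)
  moreover have "verts G \<noteq> {}" using assms by (simp add: graph_connected_def)
  ultimately show ?thesis by (auto simp: quotient_def)
qed

lemma euler_char_connected:
  "graph_connected G \<Longrightarrow> euler_char_is G k \<Longrightarrow> \<exists>n. betti1_is G n \<and> k = 1 - int n"
  by (auto simp: euler_char_is_def connected_quotient_conn_rel)

lemma thin_deficiency_nonpos:
  assumes "thin X" and "fin_presentation X Q" and "has_deficiency Q d"
  shows "d \<le> 0"
proof -
  have wf: "graph_wf (cgraph Q)" and conn: "graph_connected (cgraph Q)"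
    and "finite (cells Q)" and "presents Q X"
    using assms(2) by (auto simp: fin_presentation_def computad_wf_def)
  obtain k where "euler_char_is (cgraph Q) k" and d: "d = 1 - int (card (cells Q)) - k"
    using assms(3) by (auto simp: has_deficiency_def)
  then obtain n where "betti1_is (cgraph Q) n" and "k = 1 - int n"
    using euler_char_connected[OF conn] by blast
  moreover have "n \<le> card (cells Q)"
    using betti1_le_card_cells assms(1) \<open>presents Q X\<close> wf conn \<open>finite (cells Q)\<close> calculation
    by blast
  ultimately show ?thesis using d by simp
qed

definition thin_arrow :: "('o,'m) groupoid \<Rightarrow> 'o \<Rightarrow> 'o \<Rightarrow> 'm" where
  "thin_arrow X x y = (SOME f. f \<in> Mor X \<and> Dom X f = x \<and> Cod X f = y)"

lemma thin_arrow_eq: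
  "thin X \<Longrightarrow> f \<in> Mor X \<Longrightarrow> Dom X f = x \<Longrightarrow> Cod X f = y \<Longrightarrow> thin_arrow X x y = f"
  unfolding thin_arrow_def thin_def by (rule some_equality) auto

lemma thin_arrow_in_Mor:
  "\<exists>f\<in>Mor X. Dom X f = x \<and> Cod X f = y
   \<Longrightarrow> thin_arrow X x y \<in> Mor X \<and> Dom X (thin_arrow X x y) = x \<and> Cod X (thin_arrow X x y) = y"
  unfolding thin_arrow_def by (rule someI_ex) auto

lemma thin_groupoid_iso:
  fixes Y :: "('o,'n) groupoid" and X :: "('o,'m) groupoid"
  assumes X: "is_groupoid X" "thin X" and "thin Y" and Obj: "Obj Y = Obj X"
    and Y_ends: "\<And>f. f \<in> Mor Y \<Longrightarrow> Dom Y f \<in> Obj Y \<and> Cod Y f \<in> Obj Y"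
    and Y_Idt: "\<And>x. x \<in> Obj Y \<Longrightarrow> Dom Y (Idt Y x) = x \<and> Cod Y (Idt Y x) = x"
    and Y_Comp: "\<And>f g. f \<in> Mor Y \<Longrightarrow> g \<in> Mor Y \<Longrightarrow> Cod Y f = Dom Y g
                   \<Longrightarrow> Dom Y (Comp Y g f) = Dom Y f \<and> Cod Y (Comp Y g f) = Cod Y g"
    and Y_conn: "\<And>x y. x \<in> Obj Y \<Longrightarrow> y \<in> Obj Y \<Longrightarrow> \<exists>f\<in>Mor Y. Dom Y f = x \<and> Cod Y f = y"
    and X_conn: "\<And>x y. x \<in> Obj X \<Longrightarrow> y \<in> Obj X \<Longrightarrow> \<exists>f\<in>Mor X. Dom X f = x \<and> Cod X f = y"
  shows "groupoid_iso Y X"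
proof -
  define Fm where "Fm m = thin_arrow X (Dom Y m) (Cod Y m)" for m
  have Fm: "Fm m \<in> Mor X \<and> Dom X (Fm m) = Dom Y m \<and> Cod X (Fm m) = Cod Y m" if "m \<in> Mor Y" for m
    unfolding Fm_def using that Y_ends Obj X_conn by (intro thin_arrow_in_Mor) auto
  have X_ops: "\<forall>f\<in>Mor X. Dom X f \<in> Obj X \<and> Cod X f \<in> Obj X"
    "\<forall>x\<in>Obj X. Idt X x \<in> Mor X \<and> Dom X (Idt X x) = x \<and> Cod X (Idt X x) = x"
    "\<forall>f\<in>Mor X. \<forall>g\<in>Mor X. Cod X f = Dom X g \<longrightarrow>
        Comp X g f \<in> Mor X \<and> Dom X (Comp X g f) = Dom X f \<and> Cod X (Comp X g f) = Cod X g"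
    using X(1) by (auto simp: is_groupoid_def)
  have "inj_on Fm (Mor Y)"
    using Fm \<open>thin Y\<close> by (auto intro!: inj_onI simp: thin_def) metis
  moreover have "Mor X \<subseteq> Fm ` Mor Y"
  proof
    fix h assume h: "h \<in> Mor X"
    then obtain m where "m \<in> Mor Y" "Dom Y m = Dom X h" "Cod Y m = Cod X h"
      using Y_conn X_ops(1) Obj by metis
    then have "Fm m = h" using thin_arrow_eq[OF X(2) h] by (simp add: Fm_def)
    then show "h \<in> Fm ` Mor Y" using \<open>m \<in> Mor Y\<close> by blast
  qed
  ultimately have "bij_betw Fm (Mor Y) (Mor X)"
    using Fm by (auto simp: bij_betw_def)
  moreover have "Fm (Idt Y x) = Idt X x" if "x \<in> Obj Y" for x
    using that Y_Idt Obj X_ops(2) thin_arrow_eq[OF X(2)] by (simp add: Fm_def)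
  moreover have "Fm (Comp Y g f) = Comp X (Fm g) (Fm f)"
    if "f \<in> Mor Y" "g \<in> Mor Y" "Cod Y f = Dom Y g" for f g
  proof -
    have "Comp X (Fm g) (Fm f) \<in> Mor X" "Dom X (Comp X (Fm g) (Fm f)) = Dom Y f"
      "Cod X (Comp X (Fm g) (Fm f)) = Cod Y g"
      using that Fm X_ops(3) by auto
    then show ?thesis
      unfolding Fm_def[of "Comp Y g f"] using that Y_Comp by (simp add: thin_arrow_eq[OF X(2)])
  qed
  ultimately show ?thesis
    unfolding groupoid_iso_def using Fm Obj by (intro exI[of _ id] exI[of _ Fm]) auto
qed

subsection \<open>The star presentation\<close>

definition star_graph :: "'o \<Rightarrow> 'o set \<Rightarrow> ('o, 'o \<times> 'o) graph" where
  "star_graph o0 A = \<lparr>verts = A, arrs = {(o0, x) | x. x \<in> A \<and> x \<noteq> o0}, gsrc = fst, gtgt = snd\<rparr>"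

definition star_computad :: "'o \<Rightarrow> 'o set \<Rightarrow> ('o, 'o \<times> 'o, nat) computad" where
  "star_computad o0 A =
     \<lparr>cgraph = star_graph o0 A, cells = {}, csrc = (\<lambda>_. undefined), ctgt = (\<lambda>_. undefined)\<rparr>"

definition spoke :: "'o \<Rightarrow> 'o \<Rightarrow> ('o \<times> 'o) letter list" where
  "spoke o0 x = (if x = o0 then [] else [((o0, x), True)])"

lemma star_graph_simps [simp]:
  "verts (star_graph o0 A) = A" "arrs (star_graph o0 A) = {(o0, x) | x. x \<in> A \<and> x \<noteq> o0}"
  "gsrc (star_graph o0 A) = fst" "gtgt (star_graph o0 A) = snd"
  by (simp_all add: star_graph_def)

lemma star_computad_simps [simp]:
  "cgraph (star_computad o0 A) = star_graph o0 A" "cells (star_computad o0 A) = {}"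
  by (simp_all add: star_computad_def)

lemma star_graph_wf: "o0 \<in> A \<Longrightarrow> graph_wf (star_graph o0 A)"
  by (auto simp: graph_wf_def)

lemma is_path_spokes:
  "o0 \<in> A \<Longrightarrow> x \<in> A \<Longrightarrow> y \<in> A \<Longrightarrow> is_path (star_graph o0 A) x (winv (spoke o0 x) @ spoke o0 y) y"
  by (auto simp: spoke_def winv_def)

lemma star_graph_connected: "o0 \<in> A \<Longrightarrow> graph_connected (star_graph o0 A)"
  using is_path_spokes by (fastforce simp: graph_connected_def)

text \<open>Each arrow (o0, t) is the only arrow ending in t, so a cycle vanishes on it.\<close>
lemma star_cycle_zero:
  assumes "c \<in> cycles (star_graph o0 A)"
  shows "c e = 0"
proof (rule ccontr)
  let ?G = "star_graph o0 A"
  assume ce: "c e \<noteq> 0"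
  have fin: "finite {e. c e \<noteq> 0}" and supp: "{e. c e \<noteq> 0} \<subseteq> arrs ?G"
    using assms by (auto simp: cycles_def chains1_def)
  obtain t where e: "e = (o0, t)" "t \<noteq> o0" using ce supp by auto
  have "bdry ?G c t = (\<Sum>e'\<in>{e. c e \<noteq> 0}. if e' = e then c e' else 0)"
    unfolding bdry_def using supp e by (intro sum.cong) auto
  also have "\<dots> = c e" using fin ce by (simp add: sum.delta')
  finally show False using assms ce by (simp add: cycles_def)
qed

lemma euler_char_star_graph:
  assumes "o0 \<in> A" shows "euler_char_is (star_graph o0 A) 1"
proof -
  have "A // conn_rel (star_graph o0 A) = {A}"
    using connected_quotient_conn_rel[OF star_graph_connected[OF assms]] by simp
  moreover have "betti1_is (star_graph o0 A) 0"
    unfolding betti1_is_def using star_cycle_zero by (intro exI[of _ "{}"]) auto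
  ultimately show ?thesis
    unfolding euler_char_is_def by (intro exI[of _ 1] exI[of _ 0]) auto
qed

lemma pstep_Cons:
  assumes "pstep P (z, w, y) (z', w', y')"
    and "fst l \<in> arrs (cgraph P)" "lsrc (cgraph P) l = x" "ltgt (cgraph P) l = z"
  shows "pstep P (x, l # w, y) (x, l # w', y')"
  using assms(1)
proof (cases rule: pstep.cases)
  case (cancel u m v)
  then show ?thesis using assms(2-4) pstep.cancel[of P x "l # u" m v y] by simp
next
  case (relate \<alpha> u v)
  then show ?thesis using assms(2-4) pstep.relate[of \<alpha> P x "l # u" v y] by simp
qed

lemma equivclp_pstep_Cons:
  assumes "equivclp (pstep P) (z, w, y) (z, w', y)"
    and l: "fst l \<in> arrs (cgraph P)" "lsrc (cgraph P) l = x" "ltgt (cgraph P) l = z"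
  shows "equivclp (pstep P) (x, l # w, y) (x, l # w', y)"
proof -
  have "equivclp (pstep P) (x, l # w, y) (x, l # word q, snd (snd q))"
    if "equivclp (pstep P) (z, w, y) q" for q
    using that
  proof (induction rule: equivclp_induct)
    case (step q q')
    obtain a u b where q: "q = (a, u, b)" by (cases q)
    obtain a' u' b' where q': "q' = (a', u', b')" by (cases q')
    have "a = z" "a' = z"
      using equivclp_pstep_ends[OF step(1)] step(2) by (auto simp: q q' dest: pstep_ends)
    then have "pstep P (x, l # u, b) (x, l # u', b') \<or> pstep P (x, l # u', b') (x, l # u, b)"
      using step(2) l by (auto simp: q q' intro: pstep_Cons)
    with step.IH show ?case by (auto simp: q q' word_def intro: equivclp_into_equivclp)
  qed (simp add: word_def)
  from this[OF assms(1)] show ?thesis by (simp add: word_def)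
qed

text \<open>Free cancellation alone brings every path of the star graph to the spoke normal form.\<close>
lemma star_path_equiv_spokes:
  assumes o0: "o0 \<in> A" and p: "is_path (star_graph o0 A) x w y"
  shows "equivclp (pstep (star_computad o0 A)) (x, w, y) (x, winv (spoke o0 x) @ spoke o0 y, y)"
  using p
proof (induction w arbitrary: x)
  case Nil
  then have x: "x = y" "x \<in> A" by auto
  show ?case
  proof (cases "x = o0")
    case False
    let ?l = "((o0, x), False)"
    have "pstep (star_computad o0 A) (x, [] @ [?l, linv ?l] @ [], x) (x, [] @ [], x)"
      by (rule pstep.cancel) (use x False o0 in auto)
    then show ?thesis using x False by (auto simp: spoke_def winv_def)
  qed (use x in \<open>simp add: spoke_def winv_def\<close>)
next
  case (Cons l w)
  obtain e b where l: "l = (e, b)" by (cases l)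
  let ?Q = "star_computad o0 A" and ?z = "ltgt (star_graph o0 A) l"
  from Cons.prems have e: "e \<in> arrs (star_graph o0 A)" and xs: "lsrc (star_graph o0 A) l = x"
    and pw: "is_path (star_graph o0 A) ?z w y" by (auto simp: l)
  obtain t where et: "e = (o0, t)" "t \<in> A" "t \<noteq> o0" using e by auto
  have "y \<in> A" using is_path_end[OF pw] by simp
  have lift: "equivclp (pstep ?Q) (x, l # w, y) (x, l # (winv (spoke o0 ?z) @ spoke o0 y), y)"
    using equivclp_pstep_Cons[OF Cons.IH[OF pw]] e xs l by simp
  show ?case
  proof (cases b)
    case True
    then have "x = o0" "?z = t" using xs et l by auto
    have "pstep ?Q (x, [] @ [l, linv l] @ spoke o0 y, y) (x, [] @ spoke o0 y, y)"
      by (rule pstep.cancel) (use \<open>x = o0\<close> et \<open>y \<in> A\<close> o0 True l in \<open>auto simp: spoke_def\<close>)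
    then have "equivclp (pstep ?Q) (x, l # (winv (spoke o0 ?z) @ spoke o0 y), y)
                                    (x, winv (spoke o0 x) @ spoke o0 y, y)"
      using \<open>x = o0\<close> \<open>?z = t\<close> et True l by (simp add: spoke_def winv_def r_into_equivclp)
    then show ?thesis using lift by (rule equivclp_trans[rotated])
  next
    case False
    then have "l # (winv (spoke o0 ?z) @ spoke o0 y) = winv (spoke o0 x) @ spoke o0 y"
      using xs et l by (auto simp: spoke_def winv_def)
    then show ?thesis using lift by (metis append_Cons)
  qed
qed

lemma thin_presented_star: "o0 \<in> A \<Longrightarrow> thin (presented (star_computad o0 A))"
  unfolding thin_def
proof (intro ballI impI)
  fix f g
  assume "o0 \<in> A" and "f \<in> Mor (presented (star_computad o0 A))"
    and "g \<in> Mor (presented (star_computad o0 A))"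
    and ends: "Dom (presented (star_computad o0 A)) f = Dom (presented (star_computad o0 A)) g
             \<and> Cod (presented (star_computad o0 A)) f = Cod (presented (star_computad o0 A)) g"
  then obtain x u y x' v y' where f: "f = pclass (star_computad o0 A) (x, u, y)"
    and g: "g = pclass (star_computad o0 A) (x', v, y')"
    and u: "is_path (star_graph o0 A) x u y" and v: "is_path (star_graph o0 A) x' v y'"
    by (auto elim!: Mor_presented_cases)
  have "x' = x" "y' = y" using ends by (simp_all add: f g)
  then show "f = g"
    using star_path_equiv_spokes[OF \<open>o0 \<in> A\<close> u] star_path_equiv_spokes[OF \<open>o0 \<in> A\<close> v]
    by (simp add: f g pclass_eq_iff) (metis equivclp_sym equivclp_trans)
qed

lemma star_computad_presents:
  assumes X: "is_groupoid X" "thin X" and o0: "o0 \<in> Obj X"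
    and X_conn: "\<And>x y. x \<in> Obj X \<Longrightarrow> y \<in> Obj X \<Longrightarrow> \<exists>f\<in>Mor X. Dom X f = x \<and> Cod X f = y"
  shows "presents (star_computad o0 (Obj X)) X"
  unfolding presents_def
proof (rule thin_groupoid_iso[OF X thin_presented_star[OF o0] _ _ _ _ _ X_conn])
  let ?Y = "presented (star_computad o0 (Obj X))"
  show "Obj ?Y = Obj X" by simp
  show "Dom ?Y f \<in> Obj ?Y \<and> Cod ?Y f \<in> Obj ?Y" if "f \<in> Mor ?Y" for f
    using presented_ends_in_verts[OF _ that] star_graph_wf[OF o0] by simp
  show "Dom ?Y (Idt ?Y x) = x \<and> Cod ?Y (Idt ?Y x) = x" for x
    by (simp add: Idt_presented)
  show "Dom ?Y (Comp ?Y g f) = Dom ?Y f \<and> Cod ?Y (Comp ?Y g f) = Cod ?Y g" for f g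
    by (simp add: Dom_Comp_presented Cod_Comp_presented)
  show "\<exists>f\<in>Mor ?Y. Dom ?Y f = x \<and> Cod ?Y f = y" if "x \<in> Obj ?Y" "y \<in> Obj ?Y" for x y
    using presented_hom_nonempty[of "star_computad o0 (Obj X)"] star_graph_connected[OF o0] that
    by simp
qed

lemma star_fin_presentation:
  assumes "is_groupoid X" and "thin X" and o0: "o0 \<in> Obj X"
    and "\<And>x y. x \<in> Obj X \<Longrightarrow> y \<in> Obj X \<Longrightarrow> \<exists>f\<in>Mor X. Dom X f = x \<and> Cod X f = y"
  shows "fin_presentation X (star_computad o0 (Obj X))"
    and "has_deficiency (star_computad o0 (Obj X)) 0"
  using star_computad_presents[OF assms] star_graph_wf[OF o0] star_graph_connected[OF o0]
    euler_char_star_graph[OF o0]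
  by (auto simp: fin_presentation_def computad_wf_def has_deficiency_def)

theorem mainTheorem12:
  fixes X :: "('o,'m) groupoid" and P :: "('v,'a,'c) computad"
  assumes "is_groupoid X" and "thin X" and "fin_presentation X P"
  shows "(\<exists>Q :: ('o, 'o \<times> 'o, nat) computad. fin_presentation X Q \<and> has_deficiency Q 0)
       \<and> (\<forall>(Q :: ('v2,'a2,'c2) computad) d. fin_presentation X Q \<longrightarrow> has_deficiency Q d \<longrightarrow> d \<le> 0)"
proof
  have "presents P X" and conn: "graph_connected (cgraph P)"
    using assms(3) by (auto simp: fin_presentation_def)
  then obtain o0 where "o0 \<in> Obj X" using presents_Obj_nonempty by blast
  then show "\<exists>Q :: ('o, 'o \<times> 'o, nat) computad. fin_presentation X Q \<and> has_deficiency Q 0"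
    using star_fin_presentation[OF assms(1,2)] presents_hom_nonempty[OF \<open>presents P X\<close> conn]
    by blast
  show "\<forall>(Q :: ('v2,'a2,'c2) computad) d. fin_presentation X Q \<longrightarrow> has_deficiency Q d \<longrightarrow> d \<le> 0"
    using thin_deficiency_nonpos[OF assms(2)] by blast
qed

end
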